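(* If a finite symmetric subset $F\subset\mathrm{SL}_3(\mathbb{R})$ satisfies condition $(\ast)$, then $F$ freely generates a free subgroup of $\mathrm{SL}_3(\mathbb{R})$ (every reduced word $g_1\cdots g_n$, $n\ge1$, $g_i\in F$, $g_k\neq g_{k+1}^{-1}$, is non-trivial), and this subgroup is quasi-isometrically embedded in $\mathrm{SL}_3(\mathbb{R})$.
   Context: For $g\in\mathrm{SL}_3(\mathbb{R})$ and a line $L\in\mathbb{RP}^2$, $\|g|_L\|:=\|gv\|/\|v\|$ for any non-zero $v\in L$ (Euclidean norm). A finite symmetric set $F\subset\mathrm{SL}_3(\mathbb{R})$ satisfies condition $(\ast)$ if there exist $c>1$, a line $L_0\in\mathbb{RP}^2$, and for each $g\in F$ a subset $C_g\subset\mathbb{RP}^2$ such that: (i) $C_g\cap C_h=\emptyset$ if $g\ne h$; (ii) $L_0\notin\bigcup_{g\in F}C_g$; (iii) $g\cdot L_0\in C_g$ for all $g\in F$; (iv) $g\cdot C_h\subset C_g$ whenever $g\neq h^{-1}$; (v) $\|g|_L\|\ge c$ for all $L\in\bigcup_{h\ne g^{-1}}C_h$. *)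

theory Defs
  imports "HOL-Analysis.Analysis"
begin

type_synonym mat3 = "real^3^3"

definition SL3 :: "mat3 set" where
  "SL3 = {g. det g = 1}"

definition RP2 :: "(real^3) set set" where
  "RP2 = {L. \<exists>v. v \<noteq> 0 \<and> L = span {v}}"

definition act_line :: "mat3 \<Rightarrow> (real^3) set \<Rightarrow> (real^3) set" where
  "act_line g L = (\<lambda>x. g *v x) ` L"

definition restr_norm :: "mat3 \<Rightarrow> (real^3) set \<Rightarrow> real" where
  "restr_norm g L = (let v = (SOME v. v \<in> L \<and> v \<noteq> 0) in norm (g *v v) / norm v)"

definition symmetric_set :: "mat3 set \<Rightarrow> bool" where
  "symmetric_set F \<longleftrightarrow> (\<forall>g\<in>F. matrix_inv g \<in> F)"

definition cond_star :: "mat3 set \<Rightarrow> bool" where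
  "cond_star F \<longleftrightarrow> (\<exists>c::real. \<exists>L0. \<exists>C :: mat3 \<Rightarrow> (real^3) set set.
      c > 1 \<and> L0 \<in> RP2 \<and> (\<forall>g\<in>F. C g \<subseteq> RP2) \<and>
      (\<forall>g\<in>F. \<forall>h\<in>F. g \<noteq> h \<longrightarrow> C g \<inter> C h = {}) \<and>
      L0 \<notin> (\<Union>g\<in>F. C g) \<and>
      (\<forall>g\<in>F. act_line g L0 \<in> C g) \<and>
      (\<forall>g\<in>F. \<forall>h\<in>F. g \<noteq> matrix_inv h \<longrightarrow> act_line g ` C h \<subseteq> C g) \<and>
      (\<forall>g\<in>F. \<forall>L \<in> (\<Union>h\<in>{h\<in>F. h \<noteq> matrix_inv g}. C h). restr_norm g L \<ge> c))"

definition word_prod :: "mat3 list \<Rightarrow> mat3" where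
  "word_prod ws = foldr (**) ws (mat 1)"

definition reduced_word :: "mat3 list \<Rightarrow> bool" where
  "reduced_word ws \<longleftrightarrow> (\<forall>k. Suc k < length ws \<longrightarrow> ws ! k \<noteq> matrix_inv (ws ! Suc k))"

definition gen_group :: "mat3 set \<Rightarrow> mat3 set" where
  "gen_group F = {word_prod ws | ws. set ws \<subseteq> F}"

definition word_length :: "mat3 set \<Rightarrow> mat3 \<Rightarrow> nat" where
  "word_length F g = (LEAST n. \<exists>ws. length ws = n \<and> set ws \<subseteq> F \<and> word_prod ws = g)"

definition word_dist :: "mat3 set \<Rightarrow> mat3 \<Rightarrow> mat3 \<Rightarrow> real" where
  "word_dist F g h = real (word_length F (matrix_inv g ** h))"

text \<open>A left-invariant metric on SL_3(R) (pseudo-metric, quasi-isometric to any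
  left-invariant Riemannian metric): d(g,h) = log |g^-1 h| + log |h^-1 g|, operator norms.\<close>
definition sl_dist :: "mat3 \<Rightarrow> mat3 \<Rightarrow> real" where
  "sl_dist g h = ln (onorm (\<lambda>x. (matrix_inv g ** h) *v x)) + ln (onorm (\<lambda>x. (matrix_inv h ** g) *v x))"

definition qi_embedded :: "mat3 set \<Rightarrow> bool" where
  "qi_embedded F \<longleftrightarrow> (\<exists>A B. A \<ge> 1 \<and> B \<ge> 0 \<and>
     (\<forall>g\<in>gen_group F. \<forall>h\<in>gen_group F.
        word_dist F g h / A - B \<le> sl_dist g h \<and> sl_dist g h \<le> A * word_dist F g h + B))"

end

theory Submission
  imports Defs
begin

text \<open>Ping-pong. By (iii) and (iv), a reduced word \<open>w = g\<^sub>1 \<cdots> g\<^sub>n\<close> in \<open>F\<close> maps \<open>L\<^sub>0\<close>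
  into \<open>C\<^bsub>g\<^sub>1\<^esub>\<close>, which does not contain \<open>L\<^sub>0\<close>, so \<open>w \<noteq> 1\<close>. Moreover each letter \<open>g\<^sub>k\<close> with
  \<open>k < n\<close> acts on a line lying in some \<open>C\<^sub>h\<close> with \<open>h \<noteq> g\<^sub>k\<^sup>-\<^sup>1\<close>, so by (v) it stretches the image
  of a vector of \<open>L\<^sub>0\<close> by at least \<open>c\<close>; hence \<open>\<parallel>w\<parallel> \<ge> c\<^sup>n / (c M)\<close>, where \<open>M\<close> bounds the norms of
  the generators, while trivially \<open>\<parallel>w\<parallel> \<le> M\<^sup>n\<close>. Geodesic words are reduced and the inverse of a
  reduced word is reduced, so \<open>log \<parallel>w\<parallel> + log \<parallel>w\<^sup>-\<^sup>1\<parallel>\<close> lies between \<open>2 n log c - 2 log (c M)\<close>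
  and \<open>2 n log M\<close>, with \<open>n\<close> the word length: this is the quasi-isometric embedding.\<close>

lemma matrix_inv_left_right:
  fixes A :: "'a::semiring_1^'n^'m"
  assumes "invertible A"
  shows matrix_inv_left: "matrix_inv A ** A = mat 1"
    and matrix_inv_right: "A ** matrix_inv A = mat 1"
  using someI_ex[OF assms[unfolded invertible_def]] by (auto simp: matrix_inv_def)

lemma invertible_mat_1: "invertible (mat 1 :: 'a::semiring_1^'n^'n)"
  unfolding invertible_def by (auto intro: matrix_mul_lid)

lemma matrix_inv_unique:
  fixes A :: "'a::semiring_1^'n^'m"
  assumes "invertible A" "B ** A = mat 1"
  shows "matrix_inv A = B"
  by (metis assms matrix_inv_right matrix_mul_assoc matrix_mul_lid matrix_mul_rid)

lemma invertible_matrix_inv: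
  fixes A :: "'a::semiring_1^'n^'m"
  shows "invertible A \<Longrightarrow> invertible (matrix_inv A)"
  using matrix_inv_left matrix_inv_right invertible_def by blast

lemma matrix_inv_matrix_inv:
  fixes A :: "'a::semiring_1^'n^'m"
  shows "invertible A \<Longrightarrow> matrix_inv (matrix_inv A) = A"
  by (simp add: invertible_matrix_inv matrix_inv_right matrix_inv_unique)

lemma matrix_inv_mult:
  fixes A B :: "'a::semiring_1^'n^'n"
  assumes "invertible A" "invertible B"
  shows "matrix_inv (A ** B) = matrix_inv B ** matrix_inv A"
proof (rule matrix_inv_unique)
  show "invertible (A ** B)" using assms by (rule invertible_mult)
  have "matrix_inv B ** matrix_inv A ** (A ** B) = matrix_inv B ** (matrix_inv A ** A) ** B"
    by (simp add: matrix_mul_assoc)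
  then show "matrix_inv B ** matrix_inv A ** (A ** B) = mat 1"
    using assms by (simp add: matrix_inv_left)
qed

lemma matrix_vector_mult_eq_0_iff:
  fixes A :: "'a::field^'n^'m"
  shows "invertible A \<Longrightarrow> A *v x = 0 \<longleftrightarrow> x = 0"
  by (metis inj_matrix_vector_mult injD matrix_vector_mult_0_right)

lemma SL3_invertible: "g \<in> SL3 \<Longrightarrow> invertible g"
  by (simp add: SL3_def invertible_det_nz)

lemma word_prod_Nil [simp]: "word_prod [] = mat 1"
  by (simp add: word_prod_def)

lemma word_prod_Cons [simp]: "word_prod (a # ws) = a ** word_prod ws"
  by (simp add: word_prod_def)

lemma word_prod_append: "word_prod (xs @ ys) = word_prod xs ** word_prod ys"
  by (induction xs) (auto simp: matrix_mul_assoc)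

lemma invertible_word_prod: "\<forall>g\<in>set ws. invertible g \<Longrightarrow> invertible (word_prod ws)"
  by (induction ws) (auto intro: invertible_mult invertible_mat_1)

lemma matrix_inv_word_prod:
  "\<forall>g\<in>set ws. invertible g \<Longrightarrow> matrix_inv (word_prod ws) = word_prod (map matrix_inv (rev ws))"
  by (induction ws) (auto simp: word_prod_append matrix_mul_rid invertible_mat_1 matrix_inv_mult invertible_word_prod
      intro: matrix_inv_unique)

lemma reduced_word_Cons_Cons:
  "reduced_word (a # b # ws) \<longleftrightarrow> a \<noteq> matrix_inv b \<and> reduced_word (b # ws)"
  unfolding reduced_word_def by (auto simp: All_less_Suc2 less_Suc_eq_0_disj)

lemma reduced_word_map_inv_rev:
  assumes "\<forall>g\<in>set ws. invertible g" "reduced_word ws"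
  shows "reduced_word (map matrix_inv (rev ws))"
  unfolding reduced_word_def
proof (intro allI impI)
  fix k assume k: "Suc k < length (map matrix_inv (rev ws))"
  define j where "j = length ws - Suc (Suc k)"
  have j: "Suc j < length ws"
    using k by (simp add: j_def)
  have "map matrix_inv (rev ws) ! k = matrix_inv (ws ! Suc j)"
       "map matrix_inv (rev ws) ! Suc k = matrix_inv (ws ! j)"
    using k by (auto simp: rev_nth j_def Suc_diff_Suc)
  moreover have "ws ! j \<noteq> matrix_inv (ws ! Suc j)"
    using assms(2) j unfolding reduced_word_def by blast
  moreover have "invertible (ws ! j)" "invertible (ws ! Suc j)"
    using assms(1) j by auto
  ultimately show "map matrix_inv (rev ws) ! k \<noteq> matrix_inv (map matrix_inv (rev ws) ! Suc k)"
    by (metis matrix_inv_matrix_inv)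
qed

lemma not_reduced_word_shorten:
  assumes "\<forall>g\<in>set ws. invertible g" "\<not> reduced_word ws"
  obtains ws' where "length ws' < length ws" "set ws' \<subseteq> set ws" "word_prod ws' = word_prod ws"
proof -
  obtain k where k: "Suc k < length ws" "ws ! k = matrix_inv (ws ! Suc k)"
    using assms(2) unfolding reduced_word_def by blast
  define xs ys where "xs = take k ws" and "ys = drop (Suc (Suc k)) ws"
  have ws: "ws = xs @ ws ! k # ws ! Suc k # ys"
    using k(1) unfolding xs_def ys_def by (metis Cons_nth_drop_Suc Suc_lessD append_take_drop_id)
  have "ws ! k ** ws ! Suc k = mat 1"
    using k assms(1) by (simp add: matrix_inv_left)
  then have "word_prod (xs @ ys) = word_prod ws"
    by (subst ws) (simp add: word_prod_append matrix_mul_assoc)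
  moreover have "set (xs @ ys) \<subseteq> set ws"
    by (auto simp: xs_def ys_def dest: in_set_takeD in_set_dropD)
  moreover have "length (xs @ ys) < length ws"
    using k(1) by (simp add: xs_def ys_def)
  ultimately show thesis using that by blast
qed

lemma gen_group_geodesic_word:
  assumes "\<forall>g\<in>F. invertible g" "x \<in> gen_group F"
  obtains ws where "set ws \<subseteq> F" "reduced_word ws" "length ws = word_length F x" "word_prod ws = x"
proof -
  have "\<exists>n ws. length ws = n \<and> set ws \<subseteq> F \<and> word_prod ws = x"
    using assms(2) unfolding gen_group_def by blast
  from LeastI_ex[OF this] obtain ws
    where ws: "length ws = word_length F x" "set ws \<subseteq> F" "word_prod ws = x"
    unfolding word_length_def by blast
  have "reduced_word ws"
  proof (rule ccontr)
    assume "\<not> reduced_word ws"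
    then obtain ws' where "length ws' < length ws" "set ws' \<subseteq> set ws" "word_prod ws' = word_prod ws"
      using not_reduced_word_shorten assms(1) ws(2) by blast
    moreover have "word_length F x \<le> length ws'"
      unfolding word_length_def using calculation ws by (intro Least_le) auto
    ultimately show False using ws(1) by simp
  qed
  then show thesis using that ws by blast
qed

lemma matrix_inv_mult_mem_gen_group:
  assumes "\<forall>g\<in>F. invertible g" "symmetric_set F" "g \<in> gen_group F" "h \<in> gen_group F"
  shows "matrix_inv g ** h \<in> gen_group F"
proof -
  obtain us vs where "set us \<subseteq> F" "g = word_prod us" "set vs \<subseteq> F" "h = word_prod vs"
    using assms(3,4) unfolding gen_group_def by blast
  moreover have "\<forall>g\<in>set us. invertible g"
    using calculation assms(1) by blast
  ultimately have "matrix_inv g ** h = word_prod (map matrix_inv (rev us) @ vs)"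
    by (simp add: word_prod_append matrix_inv_word_prod)
  moreover have "set (map matrix_inv (rev us) @ vs) \<subseteq> F"
    using assms(2) \<open>set us \<subseteq> F\<close> \<open>set vs \<subseteq> F\<close> unfolding symmetric_set_def by auto
  ultimately show ?thesis
    unfolding gen_group_def by blast
qed

lemma gen_group_invertible: "\<forall>g\<in>F. invertible g \<Longrightarrow> x \<in> gen_group F \<Longrightarrow> invertible x"
  unfolding gen_group_def by (auto intro: invertible_word_prod)

lemma RP2_obtain_nonzero:
  assumes "L \<in> RP2"
  obtains v where "v \<in> L" "v \<noteq> 0"
  using assms unfolding RP2_def by (auto intro: span_base)

lemma restr_norm_eq:
  assumes "L \<in> RP2" "w \<in> L" "w \<noteq> 0"
  shows "restr_norm g L = norm (g *v w) / norm w"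
proof -
  obtain u where u: "u \<noteq> 0" "L = span {u}"
    using assms(1) unfolding RP2_def by blast
  have ratio: "norm (g *v x) / norm x = norm (g *v u) / norm u" if x: "x \<in> L" "x \<noteq> 0" for x
  proof -
    obtain a where "x = a *\<^sub>R u" "a \<noteq> 0"
      using x u by (auto simp: span_singleton)
    then show ?thesis by (simp add: matrix_vector_mult_scaleR)
  qed
  have "\<exists>v. v \<in> L \<and> v \<noteq> 0"
    using assms by blast
  from someI_ex[OF this] show ?thesis
    unfolding restr_norm_def Let_def using ratio assms(2,3) by simp
qed

lemma act_line_mult: "act_line (A ** B) L = act_line A (act_line B L)"
  unfolding act_line_def by (auto simp: image_image matrix_vector_mul_assoc)

lemma act_line_mat_1 [simp]: "act_line (mat 1) L = L"
  unfolding act_line_def by simp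

abbreviation matrix_onorm :: "real^'n^'m \<Rightarrow> real" where
  "matrix_onorm A \<equiv> onorm (\<lambda>x. A *v x)"

lemma matrix_onorm_word_prod_le:
  assumes "\<forall>g\<in>set ws. matrix_onorm g \<le> M" "M \<ge> 0"
  shows "matrix_onorm (word_prod ws) \<le> M ^ length ws"
proof (rule onorm_le)
  show "norm (word_prod ws *v x) \<le> M ^ length ws * norm x" for x
    using assms(1)
  proof (induction ws)
    case (Cons a ws)
    have "norm (word_prod (a # ws) *v x) \<le> matrix_onorm a * norm (word_prod ws *v x)"
      unfolding word_prod_Cons matrix_vector_mul_assoc[symmetric] by (rule onorm) simp
    also have "\<dots> \<le> M * (M ^ length ws * norm x)"
      using Cons assms(2) by (intro mult_mono) (auto intro: onorm_pos_le)
    finally show ?case by simp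
  qed simp
qed

lemma qi_embeddedI:
  assumes "a > 0" "b \<ge> 0"
    and bounds: "\<And>g h. g \<in> gen_group F \<Longrightarrow> h \<in> gen_group F \<Longrightarrow>
      a * word_dist F g h - b \<le> sl_dist g h \<and> sl_dist g h \<le> a' * word_dist F g h + b"
  shows "qi_embedded F"
  unfolding qi_embedded_def
proof (intro exI conjI ballI)
  define A where "A = max 1 (max a' (1 / a))"
  show "A \<ge> 1" "b \<ge> 0"
    using assms(2) by (auto simp: A_def)
  fix g h assume gh: "g \<in> gen_group F" "h \<in> gen_group F"
  have d: "word_dist F g h \<ge> 0"
    by (simp add: word_dist_def)
  have A: "1 / a \<le> A" "A > 0"
    by (auto simp: A_def)
  then have "1 \<le> a * A"
    using assms(1) by (simp add: divide_le_eq mult.commute)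
  then have "word_dist F g h \<le> a * word_dist F g h * A"
    using mult_left_mono[OF \<open>1 \<le> a * A\<close> d] by (simp add: ac_simps)
  then have "word_dist F g h / A \<le> a * word_dist F g h"
    using A(2) by (simp add: divide_le_eq)
  then show "word_dist F g h / A - b \<le> sl_dist g h"
    using bounds[OF gh] by linarith
  have "a' * word_dist F g h \<le> A * word_dist F g h"
    using d by (intro mult_right_mono) (auto simp: A_def)
  then show "sl_dist g h \<le> A * word_dist F g h + b"
    using bounds[OF gh] by linarith
qed

text \<open>Condition (*) without the disjointness (i), which the ping-pong argument never uses.\<close>
locale ping_pong =
  fixes F :: "mat3 set" and c :: real and L0 :: "(real^3) set" and C :: "mat3 \<Rightarrow> (real^3) set set"
  assumes invertible: "\<And>g. g \<in> F \<Longrightarrow> invertible g"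
    and symmetric: "symmetric_set F"
    and c_gt_1: "c > 1"
    and L0_RP2: "L0 \<in> RP2"
    and C_RP2: "\<And>g. g \<in> F \<Longrightarrow> C g \<subseteq> RP2"
    and L0_notin_C: "\<And>g. g \<in> F \<Longrightarrow> L0 \<notin> C g"
    and act_L0: "\<And>g. g \<in> F \<Longrightarrow> act_line g L0 \<in> C g"
    and act_C: "\<And>g h. g \<in> F \<Longrightarrow> h \<in> F \<Longrightarrow> g \<noteq> matrix_inv h \<Longrightarrow> act_line g ` C h \<subseteq> C g"
    and restr_norm_C:
      "\<And>g h L. g \<in> F \<Longrightarrow> h \<in> F \<Longrightarrow> h \<noteq> matrix_inv g \<Longrightarrow> L \<in> C h \<Longrightarrow> c \<le> restr_norm g L"
begin

lemma act_line_word_prod_L0: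
  "ws \<noteq> [] \<Longrightarrow> set ws \<subseteq> F \<Longrightarrow> reduced_word ws \<Longrightarrow> act_line (word_prod ws) L0 \<in> C (hd ws)"
proof (induction ws rule: induct_list012)
  case (3 x y zs)
  then have "act_line (word_prod (y # zs)) L0 \<in> C y"
    by (simp add: reduced_word_Cons_Cons)
  then show ?case
    using 3 act_C[of x y] by (auto simp: act_line_mult reduced_word_Cons_Cons)
qed (auto intro: act_L0)

lemma reduced_word_prod_neq_mat_1:
  assumes "ws \<noteq> []" "set ws \<subseteq> F" "reduced_word ws"
  shows "word_prod ws \<noteq> mat 1"
proof
  assume "word_prod ws = mat 1"
  then have "L0 \<in> C (hd ws)"
    using act_line_word_prod_L0[OF assms] by simp
  moreover have "hd ws \<in> F"
    using assms(1,2) hd_in_set by blast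
  ultimately show False
    using L0_notin_C by blast
qed

lemma norm_matrix_vector_mult_ge:
  assumes "g \<in> F" "h \<in> F" "h \<noteq> matrix_inv g" "L \<in> C h" "w \<in> L" "w \<noteq> 0"
  shows "c * norm w \<le> norm (g *v w)"
proof -
  have "c \<le> norm (g *v w) / norm w"
    using restr_norm_C[OF assms(1-4)] restr_norm_eq[OF _ assms(5,6)] C_RP2[OF assms(2)] assms(4)
    by auto
  then show ?thesis
    using assms(6) by (simp add: pos_le_divide_eq)
qed

lemma norm_word_prod_ge:
  assumes "v \<in> L0" "v \<noteq> 0"
  shows "ws \<noteq> [] \<Longrightarrow> set ws \<subseteq> F \<Longrightarrow> reduced_word ws \<Longrightarrow>
    c ^ (length ws - 1) * norm (last ws *v v) \<le> norm (word_prod ws *v v)"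
proof (induction ws rule: induct_list012)
  case (3 x y zs)
  define w where "w = word_prod (y # zs) *v v"
  have "x \<noteq> matrix_inv y" "reduced_word (y # zs)"
    using "3.prems"(3) by (simp_all add: reduced_word_Cons_Cons)
  then have "y \<noteq> matrix_inv x"
    using "3.prems"(2) invertible matrix_inv_matrix_inv by force
  moreover have "w \<in> act_line (word_prod (y # zs)) L0"
    unfolding w_def act_line_def using assms(1) by blast
  moreover have "act_line (word_prod (y # zs)) L0 \<in> C y"
    using "3.prems"(2) \<open>reduced_word (y # zs)\<close> act_line_word_prod_L0[of "y # zs"] by simp
  moreover have "invertible (word_prod (y # zs))"
    using "3.prems"(2) invertible by (intro invertible_word_prod) auto
  then have "w \<noteq> 0"
    unfolding w_def using assms(2) by (simp add: matrix_vector_mult_eq_0_iff)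
  ultimately have "c * norm w \<le> norm (x *v w)"
    using "3.prems"(2) by (intro norm_matrix_vector_mult_ge) auto
  also have "x *v w = word_prod (x # y # zs) *v v"
    by (simp add: w_def matrix_vector_mul_assoc)
  finally have step: "c * norm w \<le> norm (word_prod (x # y # zs) *v v)" .
  have "c ^ (length (x # y # zs) - 1) * norm (last (x # y # zs) *v v)
      = c * (c ^ (length (y # zs) - 1) * norm (last (y # zs) *v v))"
    by simp
  also have "\<dots> \<le> c * norm w"
    using "3.IH"(2) "3.prems"(2) \<open>reduced_word (y # zs)\<close> c_gt_1 unfolding w_def by simp
  finally show ?case
    using step by linarith
qed simp_all

lemma matrix_onorm_word_prod_ge:
  assumes M: "\<forall>g\<in>F. matrix_onorm g \<le> M" "M \<ge> 1" and ws: "set ws \<subseteq> F" "reduced_word ws"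
  shows "c ^ length ws \<le> c * M * matrix_onorm (word_prod ws)"
proof (cases "ws = []")
  case True
  have "matrix_onorm (mat 1 :: mat3) = 1"
    by (simp add: onorm_id)
  moreover have "1 * 1 \<le> c * M"
    using c_gt_1 M(2) by (intro mult_mono) auto
  ultimately show ?thesis
    using True by simp
next
  case False
  obtain v where v: "v \<in> L0" "v \<noteq> 0"
    using L0_RP2 by (rule RP2_obtain_nonzero)
  define g where "g = last ws"
  have g: "g \<in> F" "matrix_inv g \<in> F"
    using False ws(1) symmetric last_in_set unfolding g_def symmetric_set_def by blast+
  have "norm v = norm (matrix_inv g *v (g *v v))"
    using invertible[OF g(1)] by (simp add: matrix_vector_mul_assoc matrix_inv_left)
  also have "\<dots> \<le> matrix_onorm (matrix_inv g) * norm (g *v v)"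
    by (simp add: onorm)
  also have "\<dots> \<le> M * norm (g *v v)"
    using M(1) g(2) by (simp add: mult_right_mono)
  finally have nv: "norm v \<le> M * norm (g *v v)" .
  have "c ^ length ws = c * c ^ (length ws - 1)"
    using False by (cases ws) auto
  then have "c ^ length ws * norm v \<le> c * c ^ (length ws - 1) * (M * norm (g *v v))"
    using nv c_gt_1 by (simp add: mult_left_mono)
  also have "\<dots> = c * M * (c ^ (length ws - 1) * norm (g *v v))"
    by (simp add: ac_simps)
  also have "\<dots> \<le> c * M * norm (word_prod ws *v v)"
    using norm_word_prod_ge[OF v False ws] c_gt_1 M(2) unfolding g_def by (intro mult_left_mono) auto
  also have "\<dots> \<le> c * M * (matrix_onorm (word_prod ws) * norm v)"
    using c_gt_1 M(2) by (intro mult_left_mono onorm) auto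
  finally show ?thesis
    using v(2) by (simp add: mult.assoc)
qed

lemma ln_matrix_onorm_reduced_word:
  assumes M: "\<forall>g\<in>F. matrix_onorm g \<le> M" "M \<ge> 1" and ws: "set ws \<subseteq> F" "reduced_word ws"
  shows "length ws * ln c - ln (c * M) \<le> ln (matrix_onorm (word_prod ws))"
    and "ln (matrix_onorm (word_prod ws)) \<le> length ws * ln M"
proof -
  have cM: "c * M > 0"
    using c_gt_1 M(2) by simp
  have lower: "c ^ length ws \<le> c * M * matrix_onorm (word_prod ws)"
    using matrix_onorm_word_prod_ge[OF M ws] .
  have "0 < c * M * matrix_onorm (word_prod ws)"
    using c_gt_1 by (intro less_le_trans[OF _ lower]) simp
  then have pos: "matrix_onorm (word_prod ws) > 0"
    using cM by (simp add: zero_less_mult_iff)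
  have "length ws * ln c = ln (c ^ length ws)"
    using c_gt_1 by (simp add: ln_realpow)
  also have "\<dots> \<le> ln (c * M * matrix_onorm (word_prod ws))"
    using lower c_gt_1 by (intro ln_mono) auto
  also have "\<dots> = ln (c * M) + ln (matrix_onorm (word_prod ws))"
    using cM pos by (rule ln_mult_pos)
  finally show "length ws * ln c - ln (c * M) \<le> ln (matrix_onorm (word_prod ws))"
    by simp
  have "matrix_onorm (word_prod ws) \<le> M ^ length ws"
    using M ws(1) by (intro matrix_onorm_word_prod_le) auto
  then have "ln (matrix_onorm (word_prod ws)) \<le> ln (M ^ length ws)"
    using pos by (intro ln_mono) auto
  then show "ln (matrix_onorm (word_prod ws)) \<le> length ws * ln M"
    using M(2) by (simp add: ln_realpow)
qed

lemma sl_dist_word_dist_bounds: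
  assumes M: "\<forall>g\<in>F. matrix_onorm g \<le> M" "M \<ge> 1" and gh: "g \<in> gen_group F" "h \<in> gen_group F"
  shows "2 * ln c * word_dist F g h - 2 * ln (c * M) \<le> sl_dist g h"
    and "sl_dist g h \<le> 2 * ln M * word_dist F g h"
proof -
  have invertible_F: "\<forall>g\<in>F. invertible g"
    using invertible by blast
  obtain ws where ws: "set ws \<subseteq> F" "reduced_word ws"
      "length ws = word_length F (matrix_inv g ** h)" "word_prod ws = matrix_inv g ** h"
    using gen_group_geodesic_word[OF invertible_F matrix_inv_mult_mem_gen_group[OF invertible_F symmetric gh]] .
  define ws' where "ws' = map matrix_inv (rev ws)"
  have inv_ws: "\<forall>g\<in>set ws. invertible g"
    using ws(1) invertible by blast
  have ws': "set ws' \<subseteq> F" "reduced_word ws'" "length ws' = length ws"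
    using ws(1,2) inv_ws symmetric reduced_word_map_inv_rev
    unfolding ws'_def symmetric_set_def by auto
  have "matrix_inv h ** g = matrix_inv (matrix_inv g ** h)"
    using gen_group_invertible[OF invertible_F] gh
    by (simp add: matrix_inv_mult invertible_matrix_inv matrix_inv_matrix_inv)
  moreover have "word_prod ws' = matrix_inv (word_prod ws)"
    using inv_ws by (simp add: ws'_def matrix_inv_word_prod)
  ultimately have "word_prod ws' = matrix_inv h ** g"
    using ws(4) by simp
  then have sl: "sl_dist g h = ln (matrix_onorm (word_prod ws)) + ln (matrix_onorm (word_prod ws'))"
    using ws(4) by (simp add: sl_dist_def)
  have wd: "word_dist F g h = length ws"
    using ws(3) by (simp add: word_dist_def)
  have dist: "2 * ln c * word_dist F g h = length ws * ln c + length ws * ln c"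
    "2 * ln M * word_dist F g h = length ws * ln M + length ws * ln M"
    by (simp_all add: wd)
  show "2 * ln c * word_dist F g h - 2 * ln (c * M) \<le> sl_dist g h"
    using ln_matrix_onorm_reduced_word(1)[OF M ws(1,2)] ln_matrix_onorm_reduced_word(1)[OF M ws'(1,2)]
    unfolding sl ws'(3) dist by linarith
  show "sl_dist g h \<le> 2 * ln M * word_dist F g h"
    using ln_matrix_onorm_reduced_word(2)[OF M ws(1,2)] ln_matrix_onorm_reduced_word(2)[OF M ws'(1,2)]
    unfolding sl ws'(3) dist by linarith
qed

lemma qi_embedded:
  assumes "finite F"
  shows "qi_embedded F"
proof -
  define M where "M = max 1 (Max (matrix_onorm ` F))"
  have M: "\<forall>g\<in>F. matrix_onorm g \<le> M" "M \<ge> 1"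
    using assms by (auto simp: M_def intro: max.coboundedI2)
  have "1 * 1 \<le> c * M"
    using c_gt_1 M(2) by (intro mult_mono) auto
  then have "ln (c * M) \<ge> 0"
    by simp
  show ?thesis
  proof (rule qi_embeddedI[where a = "2 * ln c" and a' = "2 * ln M" and b = "2 * ln (c * M)"])
    show "2 * ln c > 0" "2 * ln (c * M) \<ge> 0"
      using c_gt_1 \<open>ln (c * M) \<ge> 0\<close> by simp_all
  next
    fix g h assume "g \<in> gen_group F" "h \<in> gen_group F"
    then show "2 * ln c * word_dist F g h - 2 * ln (c * M) \<le> sl_dist g h \<and>
        sl_dist g h \<le> 2 * ln M * word_dist F g h + 2 * ln (c * M)"
      using sl_dist_word_dist_bounds[OF M] \<open>ln (c * M) \<ge> 0\<close> by fastforce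
  qed
qed

end

lemma cond_star_ping_pong:
  assumes "cond_star F" "F \<subseteq> SL3" "symmetric_set F"
  obtains c L0 C where "ping_pong F c L0 C"
proof -
  from assms(1) obtain c L0 C where star: "c > 1" "L0 \<in> RP2" "\<forall>g\<in>F. C g \<subseteq> RP2"
    "L0 \<notin> (\<Union>g\<in>F. C g)" "\<forall>g\<in>F. act_line g L0 \<in> C g"
    "\<forall>g\<in>F. \<forall>h\<in>F. g \<noteq> matrix_inv h \<longrightarrow> act_line g ` C h \<subseteq> C g"
    "\<forall>g\<in>F. \<forall>L \<in> (\<Union>h\<in>{h\<in>F. h \<noteq> matrix_inv g}. C h). restr_norm g L \<ge> c"
    unfolding cond_star_def by (elim exE conjE) (rule that, assumption+)
  have "ping_pong F c L0 C"
  proof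
    show "invertible g" if "g \<in> F" for g
      using that assms(2) SL3_invertible by blast
    show "c \<le> restr_norm g L"
      if "g \<in> F" "h \<in> F" "h \<noteq> matrix_inv g" "L \<in> C h" for g h L
    proof -
      have "L \<in> (\<Union>h\<in>{h\<in>F. h \<noteq> matrix_inv g}. C h)"
        using that(2-4) by blast
      then show ?thesis
        using star(7) that(1) by blast
    qed
  qed (use assms(3) star(1-6) in simp_all)
  then show thesis
    by (rule that)
qed

theorem mainTheorem10:
  fixes F :: "mat3 set"
  assumes "finite F" and "F \<subseteq> SL3" and "symmetric_set F" and "cond_star F"
  shows "(\<forall>ws. ws \<noteq> [] \<and> set ws \<subseteq> F \<and> reduced_word ws \<longrightarrow> word_prod ws \<noteq> mat 1)
         \<and> qi_embedded F"
proof -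
  obtain c L0 C where "ping_pong F c L0 C"
    using cond_star_ping_pong[OF assms(4,2,3)] by blast
  then interpret ping_pong F c L0 C .
  show ?thesis
    using reduced_word_prod_neq_mat_1 qi_embedded[OF assms(1)] by blast
qed

end
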